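(* For all $0<|t|<\pi/2$, \[ \frac{\pi^2+\frac{28-8\pi}{\pi}t^2+\frac{16\pi-48}{\pi^3}t^4}{\pi^2-4t^2}<\sec t<\frac{\pi^2-\frac{8-\pi^2}{2}t^2-\frac{4\pi^3-128}{2\pi^3}t^4}{\pi^2-4t^2}. \] *)

theory Defs
  imports Complex_Main
begin

definition sec :: "real \<Rightarrow> real" where
  "sec t = 1 / cos t"

end

theory Submission
  imports Defs "HOL-Analysis.Complex_Transcendental"
begin

text \<open>
  Clearing denominators, the two bounds say that \<open>cos t\<close> times an even quartic lies below,
  resp. above, \<open>\<pi>\<^sup>2 - 4t\<^sup>2\<close>. Both are tight as \<open>t \<rightarrow> \<pi>/2\<close>, and the upper one also to second
  order at \<open>t = 0\<close>, so \<open>cos\<close> must be approximated well at both ends. For \<open>t \<le> 1\<close> we replace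
  \<open>cos t\<close> by its Taylor polynomial of degree 6 plus or minus the remainder bound \<open>t\<^sup>8/8!\<close>; for
  \<open>t \<ge> 1\<close> we write \<open>cos t = sin u\<close> with \<open>0 < u = \<pi>/2 - t < 0.571\<close> and use the Taylor polynomial
  of \<open>sin u\<close> of degree 5 instead. In each of the four cases the resulting polynomial difference
  is a power of the variable times a polynomial in the variable and \<open>\<pi>\<close>, whose positivity is
  certified by interval Horner evaluation over \<open>\<pi> \<in> [3.14159, 3.1416]\<close> on a few subintervals.
\<close>

fun horner :: "real list \<Rightarrow> real \<Rightarrow> real" where
  "horner [] x = 0"
| "horner (c # cs) x = c + x * horner cs x"

definition horner2 :: "real list list \<Rightarrow> real \<Rightarrow> real \<Rightarrow> real" where
  "horner2 dss y x = horner (map (\<lambda>ds. horner ds y) dss) x"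

fun horner_lower :: "real list \<Rightarrow> real \<Rightarrow> real \<Rightarrow> real" where
  "horner_lower [] a b = 0"
| "horner_lower (c # cs) a b =
     (let l = horner_lower cs a b in c + (if 0 \<le> l then a * l else b * l))"

fun positive_cover :: "real list \<Rightarrow> real list \<Rightarrow> bool" where
  "positive_cover cs [a, b] \<longleftrightarrow> 0 < horner_lower cs a b"
| "positive_cover cs (a # b # c # bs) \<longleftrightarrow>
     0 < horner_lower cs a b \<and> positive_cover cs (b # c # bs)"
| "positive_cover cs _ \<longleftrightarrow> False"

lemma horner_lower_le:
  assumes "0 \<le> a" "a \<le> x" "x \<le> b"
  shows "horner_lower cs a b \<le> horner cs x"
proof (induction cs)
  case Nil
  then show ?case by simp
next
  case (Cons c cs)
  define l where "l = horner_lower cs a b"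
  have "(if 0 \<le> l then a * l else b * l) \<le> x * l"
    using assms by (auto intro: mult_right_mono mult_right_mono_neg)
  also have "x * l \<le> x * horner cs x"
    using Cons.IH assms unfolding l_def by (intro mult_left_mono) auto
  finally show ?case by (simp add: Let_def flip: l_def)
qed

lemma horner_mono_coeffs:
  assumes "list_all2 (\<le>) ls cs" "0 \<le> x"
  shows "horner ls x \<le> horner cs x"
  using assms(1) by induction (auto intro: add_mono mult_left_mono assms(2))

lemma horner_pos_if_positive_cover:
  assumes "positive_cover cs bs" "sorted bs" "0 \<le> hd bs" "hd bs \<le> x" "x \<le> last bs"
  shows "0 < horner cs x"
  using assms
proof (induction cs bs rule: positive_cover.induct)
  case (1 cs a b)
  then show ?case using horner_lower_le[of a x b cs] by simp
next
  case (2 cs a b c bs)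
  show ?case
  proof (cases "x \<le> b")
    case True
    then show ?thesis using 2 horner_lower_le[of a x b cs] by simp
  next
    case False
    then show ?thesis using 2 by simp
  qed
qed auto

lemma horner_lower_le_horner2:
  assumes "0 \<le> a" "a \<le> y" "y \<le> b" "0 \<le> x"
  shows "horner (map (\<lambda>ds. horner_lower ds a b) dss) x \<le> horner2 dss y x"
  unfolding horner2_def using assms
  by (intro horner_mono_coeffs) (auto simp: list_all2_conv_all_nth horner_lower_le)

lemma pi_bounds: "3.14159 \<le> pi" "pi \<le> 3.1416"
  using pi_approx by simp_all

lemma horner2_pi_pos_if_positive_cover:
  assumes "positive_cover (map (\<lambda>ds. horner_lower ds 3.14159 3.1416) dss) bs"
    and "sorted bs" "0 \<le> hd bs" "hd bs \<le> x" "x \<le> last bs"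
  shows "0 < horner2 dss pi x"
  using horner_pos_if_positive_cover[OF assms] horner_lower_le_horner2[OF _ pi_bounds, of x dss]
    assms(3,4)
  by simp

lemma Maclaurin_cos_bound:
  "\<bar>cos x - (\<Sum>m<n. cos_coeff m * x ^ m)\<bar> \<le> inverse (fact n) * \<bar>x\<bar> ^ n"
proof -
  obtain s where s: "cos x = (\<Sum>m<n. cos_coeff m * x ^ m) + cos s / fact n * x ^ n"
    using Maclaurin_cos_expansion[of x n] by blast
  have "\<bar>cos s / fact n * x ^ n\<bar> \<le> inverse (fact n) * \<bar>x\<bar> ^ n"
    by (simp add: abs_mult power_abs divide_inverse mult_right_mono)
  then show ?thesis using s by simp
qed

lemma cos_taylor6_bound:
  fixes t :: real
  shows "\<bar>cos t - (1 - t^2/2 + t^4/24 - t^6/720)\<bar> \<le> t^8/40320"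
  using Maclaurin_cos_bound[of t 8]
  by (simp add: cos_coeff_def lessThan_nat_numeral fact_numeral algebra_simps)

lemma sin_taylor5_bound:
  fixes u :: real
  assumes "0 \<le> u"
  shows "\<bar>sin u - (u - u^3/6 + u^5/120)\<bar> \<le> u^7/5040"
  using Maclaurin_sin_bound[of u 7] assms
  by (simp add: sin_coeff_def lessThan_nat_numeral fact_numeral algebra_simps)

definition sec_lower_num :: "real \<Rightarrow> real" where
  "sec_lower_num t = pi^2 + (28 - 8*pi)/pi * t^2 + (16*pi - 48)/pi^3 * t^4"

definition sec_upper_num :: "real \<Rightarrow> real" where
  "sec_upper_num t = pi^2 - (8 - pi^2)/2 * t^2 - (4*pi^3 - 128)/(2*pi^3) * t^4"

lemma sec_lower_num_pos: "0 < sec_lower_num t"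
proof -
  have "0 \<le> (28 - 8*pi)/pi" "0 \<le> (16*pi - 48)/pi^3"
    using pi_bounds by simp_all
  then show ?thesis
    unfolding sec_lower_num_def by (intro add_pos_nonneg mult_nonneg_nonneg) auto
qed

lemma sec_upper_num_pos: "0 < sec_upper_num t"
proof -
  have "pi^3 \<le> 3.1416^3" "3.14159^2 \<le> pi^2"
    using pi_bounds by (intro power_mono; simp)+
  then have "(8 - pi^2)/2 \<le> 0" "(4*pi^3 - 128)/(2*pi^3) \<le> 0"
    by (simp_all add: field_simps)
  then have "(8 - pi^2)/2 * t^2 \<le> 0" "(4*pi^3 - 128)/(2*pi^3) * t^4 \<le> 0"
    by (intro mult_nonpos_nonneg; simp)+
  moreover have "0 < pi^2"
    by simp
  ultimately show ?thesis
    unfolding sec_upper_num_def by linarith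
qed

text \<open>
  Entry \<open>i, j\<close> is the coefficient of \<open>x\<^sup>i \<pi>\<^sup>j\<close>; near \<open>0\<close> the variable is \<open>x = t\<^sup>2\<close>, near
  \<open>\<pi>/2\<close> it is \<open>x = \<pi>/2 - t\<close>.
\<close>

definition lower_gap_at_0 :: "real list list" where
  "lower_gap_at_0 =
    [[0, 0, -28, 4, 0, 1/2], [48, -16, 14, -4, 0, -1/24], [-24, 8, -7/6, 1/3, 0, 1/720],
     [2, -2/3, 7/180, -1/90, 0, -1/40320], [-1/15, 1/45, -1/1440, 1/5040], [1/840, -1/2520]]"

definition upper_gap_at_0 :: "real list list" where
  "upper_gap_at_0 =
    [[128, 0, 0, 0, 0, -5/12], [-64, 0, 0, 5/3, 0, 7/180], [16/3, 0, 0, -7/45, 0, -29/20160],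
     [-8/45, 0, 0, 29/5040, 0, -1/40320], [-1/315, 0, 0, 1/10080]]"

definition lower_gap_at_half_pi :: "real list list" where
  "lower_gap_at_half_pi =
    [[0, 0, 44, -16, 2/3], [0, -96, 32, -2/3], [48, -16, -22/3, 8/3, -1/30], [0, 16, -16/3, 1/30],
     [-8, 8/3, 11/30, -2/15, -1/1260], [0, -4/5, 4/15, 1/1260], [2/5, -2/15, 11/1260, -1/315],
     [0, -2/105, 2/315], [1/105, -1/315]]"

definition upper_gap_at_half_pi :: "real list list" where
  "upper_gap_at_half_pi =
    [[0, 0, 0, -56, 8, 0, 1], [0, 0, 192, -8, -4/3, -5], [0, -256, 0, 32/3, 20/3, 0, -1/6],
     [128, 0, -32, -8/3, 1/15, 5/6], [0, 128/3, 0, -8/15, -19/15, 0, 1/120],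
     [-64/3, 0, 8/5, 3/5, -1/630, -1/24], [0, -32/15, 0, 4/315, 41/630, 0, -1/5040],
     [16/15, 0, -4/105, -2/63, 0, 1/1008], [0, 16/315, 0, 0, -1/630], [-8/315, 0, 0, 1/1260]]"

lemma lower_gap_at_0_pos: "0 \<le> x \<Longrightarrow> x \<le> 1 \<Longrightarrow> 0 < horner2 lower_gap_at_0 pi x"
  by (rule horner2_pi_pos_if_positive_cover[where bs = "[0, 3/4, 1]"])
    (simp_all add: lower_gap_at_0_def Let_def)

lemma upper_gap_at_0_pos: "0 \<le> x \<Longrightarrow> x \<le> 1 \<Longrightarrow> 0 < horner2 upper_gap_at_0 pi x"
  by (rule horner2_pi_pos_if_positive_cover[where bs = "[0, 1]"])
    (simp_all add: upper_gap_at_0_def Let_def)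

lemma lower_gap_at_half_pi_pos:
  "0 \<le> x \<Longrightarrow> x \<le> 0.571 \<Longrightarrow> 0 < horner2 lower_gap_at_half_pi pi x"
  by (rule horner2_pi_pos_if_positive_cover[where bs = "[0, 9/20, 0.571]"])
    (simp_all add: lower_gap_at_half_pi_def Let_def)

lemma upper_gap_at_half_pi_pos:
  "0 \<le> x \<Longrightarrow> x \<le> 0.571 \<Longrightarrow> 0 < horner2 upper_gap_at_half_pi pi x"
  by (rule horner2_pi_pos_if_positive_cover[where bs = "[0, 3/10, 9/20, 1/2, 0.571]"])
    (simp_all add: upper_gap_at_half_pi_def Let_def)

lemma lower_gap_at_0_eq:
  "pi^3 * ((pi^2 - 4*t^2) - (1 - t^2/2 + t^4/24 - t^6/720 + t^8/40320) * sec_lower_num t)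
     = t^2 * horner2 lower_gap_at_0 pi (t^2)"
  unfolding sec_lower_num_def lower_gap_at_0_def horner2_def
  by (simp add: field_simps) (simp add: algebra_simps power_def)

lemma upper_gap_at_0_eq:
  "2*pi^3 * ((1 - t^2/2 + t^4/24 - t^6/720 - t^8/40320) * sec_upper_num t - (pi^2 - 4*t^2))
     = t^4 * horner2 upper_gap_at_0 pi (t^2)"
  unfolding sec_upper_num_def upper_gap_at_0_def horner2_def
  by (simp add: field_simps) (simp add: algebra_simps power_def)

lemma lower_gap_at_half_pi_eq:
  "pi^3 * ((pi^2 - 4*(pi/2 - u)^2)
            - (u - u^3/6 + u^5/120 + u^7/5040) * sec_lower_num (pi/2 - u))
     = u^3 * horner2 lower_gap_at_half_pi pi u"
  unfolding sec_lower_num_def lower_gap_at_half_pi_def horner2_def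
  by (simp add: field_simps) (simp add: algebra_simps power_def)

lemma upper_gap_at_half_pi_eq:
  "2*pi^3 * ((u - u^3/6 + u^5/120 - u^7/5040) * sec_upper_num (pi/2 - u)
              - (pi^2 - 4*(pi/2 - u)^2))
     = u^2 * horner2 upper_gap_at_half_pi pi u"
  unfolding sec_upper_num_def upper_gap_at_half_pi_def horner2_def
  by (simp add: field_simps) (simp add: algebra_simps power_def)

lemma cos_mult_sec_lower_num_less_near_0:
  assumes "0 < t" "t \<le> 1"
  shows "cos t * sec_lower_num t < pi^2 - 4*t^2"
proof -
  let ?T = "1 - t^2/2 + t^4/24 - t^6/720 + t^8/40320"
  have "cos t \<le> ?T"
    using cos_taylor6_bound[of t] by linarith
  then have "cos t * sec_lower_num t \<le> ?T * sec_lower_num t"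
    by (intro mult_right_mono) (auto intro: less_imp_le sec_lower_num_pos)
  also have "?T * sec_lower_num t < pi^2 - 4*t^2"
  proof -
    have "0 < pi^3 * ((pi^2 - 4*t^2) - ?T * sec_lower_num t)"
      unfolding lower_gap_at_0_eq using lower_gap_at_0_pos[of "t^2"] assms
      by (simp add: power_le_one)
    then show ?thesis
      by (simp add: zero_less_mult_iff)
  qed
  finally show ?thesis .
qed

lemma less_cos_mult_sec_upper_num_near_0:
  assumes "0 < t" "t \<le> 1"
  shows "pi^2 - 4*t^2 < cos t * sec_upper_num t"
proof -
  let ?T = "1 - t^2/2 + t^4/24 - t^6/720 - t^8/40320"
  have "pi^2 - 4*t^2 < ?T * sec_upper_num t"
  proof -
    have "0 < 2*pi^3 * (?T * sec_upper_num t - (pi^2 - 4*t^2))"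
      unfolding upper_gap_at_0_eq using upper_gap_at_0_pos[of "t^2"] assms
      by (simp add: power_le_one)
    then show ?thesis
      by (simp add: zero_less_mult_iff)
  qed
  also have "?T \<le> cos t"
    using cos_taylor6_bound[of t] by linarith
  then have "?T * sec_upper_num t \<le> cos t * sec_upper_num t"
    by (intro mult_right_mono) (auto intro: less_imp_le sec_upper_num_pos)
  finally show ?thesis .
qed

lemma cos_mult_sec_lower_num_less_near_half_pi:
  assumes "1 \<le> t" "t < pi/2"
  shows "cos t * sec_lower_num t < pi^2 - 4*t^2"
proof -
  define u where "u = pi/2 - t"
  have u: "0 < u" "u \<le> 0.571" and t: "t = pi/2 - u"
    using assms pi_bounds by (simp_all add: u_def)
  have cos_t: "cos t = sin u"
    by (simp add: t sin_cos_eq)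
  let ?S = "u - u^3/6 + u^5/120 + u^7/5040"
  have "cos t \<le> ?S"
    using sin_taylor5_bound[of u] u cos_t by linarith
  then have "cos t * sec_lower_num t \<le> ?S * sec_lower_num t"
    by (intro mult_right_mono) (auto intro: less_imp_le sec_lower_num_pos)
  also have "?S * sec_lower_num t < pi^2 - 4*t^2"
  proof -
    have "0 < pi^3 * ((pi^2 - 4*(pi/2 - u)^2) - ?S * sec_lower_num (pi/2 - u))"
      unfolding lower_gap_at_half_pi_eq using lower_gap_at_half_pi_pos[of u] u by simp
    then show ?thesis
      by (simp add: t zero_less_mult_iff)
  qed
  finally show ?thesis .
qed

lemma less_cos_mult_sec_upper_num_near_half_pi:
  assumes "1 \<le> t" "t < pi/2"
  shows "pi^2 - 4*t^2 < cos t * sec_upper_num t"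
proof -
  define u where "u = pi/2 - t"
  have u: "0 < u" "u \<le> 0.571" and t: "t = pi/2 - u"
    using assms pi_bounds by (simp_all add: u_def)
  have cos_t: "cos t = sin u"
    by (simp add: t sin_cos_eq)
  let ?S = "u - u^3/6 + u^5/120 - u^7/5040"
  have "pi^2 - 4*t^2 < ?S * sec_upper_num t"
  proof -
    have "0 < 2*pi^3 * (?S * sec_upper_num (pi/2 - u) - (pi^2 - 4*(pi/2 - u)^2))"
      unfolding upper_gap_at_half_pi_eq using upper_gap_at_half_pi_pos[of u] u by simp
    then show ?thesis
      by (simp add: t zero_less_mult_iff)
  qed
  also have "?S \<le> cos t"
    using sin_taylor5_bound[of u] u cos_t by linarith
  then have "?S * sec_upper_num t \<le> cos t * sec_upper_num t"
    by (intro mult_right_mono) (auto intro: less_imp_le sec_upper_num_pos)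
  finally show ?thesis .
qed

lemma sec_bounds_of_pos:
  assumes "0 < t" "t < pi/2"
  shows "sec_lower_num t / (pi^2 - 4*t^2) < sec t \<and> sec t < sec_upper_num t / (pi^2 - 4*t^2)"
proof -
  have "0 < cos t"
    using assms by (intro cos_gt_zero_pi) auto
  moreover have "0 < pi^2 - 4*t^2"
    using power_strict_mono[of "2*t" pi 2] assms by (simp add: power_mult_distrib)
  moreover have "cos t * sec_lower_num t < pi^2 - 4*t^2"
    using assms cos_mult_sec_lower_num_less_near_0 cos_mult_sec_lower_num_less_near_half_pi
    by (cases "t \<le> 1") auto
  moreover have "pi^2 - 4*t^2 < cos t * sec_upper_num t"
    using assms less_cos_mult_sec_upper_num_near_0 less_cos_mult_sec_upper_num_near_half_pi
    by (cases "t \<le> 1") auto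
  ultimately show ?thesis
    by (simp add: sec_def field_simps)
qed

theorem mainTheorem17:
  fixes t :: real
  assumes "0 < \<bar>t\<bar>" and "\<bar>t\<bar> < pi / 2"
  shows "(pi^2 + (28 - 8*pi)/pi * t^2 + (16*pi - 48)/pi^3 * t^4) / (pi^2 - 4*t^2) < sec t
       \<and> sec t < (pi^2 - (8 - pi^2)/2 * t^2 - (4*pi^3 - 128)/(2*pi^3) * t^4) / (pi^2 - 4*t^2)"
  using sec_bounds_of_pos[OF assms] by (simp add: sec_lower_num_def sec_upper_num_def sec_def)

end
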